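(* Let $n\ge1$, $d\ge1$ and let $U\subseteq\mathbb R^d$ be a finite set with $|U|\ge3$ contained in the closed unit ball, with a fixed enumeration $U=\{v_1,\dots,v_{|U|}\}$; let $P(U)$ be its power set. Then there exist sets $\Psi_1,\dots,\Psi_n\subseteq\mathbb R^{2n}$, a number $0<\epsilon<\frac1n$, and maps $\phi:P(U)\times[n]\to\mathbb R^{2n}$ and $\alpha:\mathbb R^{2n}\to U$ such that: (i) $\|\phi(V,j)\|\le 1$ for all $V\subseteq U$, $j\in[n]$; (ii) for every $k\in[n]$ and $\psi\in\Psi_k$, $\|\psi\|\le1$ and $\|\alpha(\psi)\|\le1$; (iii) for every $k\in[n]$ and all $V_1,\dots,V_k\subseteq U$, the vector $\psi_k^*=\frac1n\sum_{i=1}^k\phi(V_i,i)$ lies in $\Psi_k$ and satisfies: for every $\psi\in\Psi_k$ with $\psi\ne\psi_k^*$, $\big\langle\psi_k^*,\frac1n\sum_{i=1}^k\phi(V_i,i)\big\rangle\ge\big\langle\psi,\frac1n\sum_{i=1}^k\phi(V_i,i)\big\rangle+\epsilon$; and if $\bigcap_{i=1}^kV_i\ne\emptyset$ then $\alpha(\psi_k^* )=v_m$ where $m=\min\{i: v_i\in\bigcap_{l=1}^kV_l\}$.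
   Context: $[N]=\{1,\dots,N\}$; norms are Euclidean. *)

theory Defs
  imports "HOL-Analysis.Analysis"
begin

end

theory Submission
  imports Defs
begin

text \<open>View \<open>\<real>\<^sup>2\<^sup>n\<close> as \<open>n\<close> coordinate planes. Map the finitely many subsets of \<open>U\<close>
  injectively onto points of the unit circle with positive first coordinate, and let \<open>\<phi>(V, j)\<close>
  be the point of \<open>V\<close> placed in the \<open>j\<close>-th plane. The vector \<open>(1/n) \<Sum>\<^sub>i \<phi>(V\<^sub>i, i)\<close>, summed
  over \<open>i \<le> k\<close>, determines \<open>k\<close> and \<open>V\<^sub>1, \<dots>, V\<^sub>k\<close>, so \<open>\<alpha>\<close> can be defined by decoding.
  For two such vectors of the same length built from unit points \<open>p\<^sub>j\<close> and \<open>q\<^sub>j\<close>, the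
  inner product gap is \<open>(1/2n\<^sup>2) \<Sum>\<^sub>j \<parallel>p\<^sub>j - q\<^sub>j\<parallel>\<^sup>2\<close>, which is bounded below by the squared
  minimal distance between the finitely many circle points, divided by \<open>2n\<^sup>2\<close>.\<close>

lemma finite_imp_uniformly_discrete:
  fixes P :: "'a::metric_space set"
  assumes "finite P"
  obtains \<delta> where "\<delta> > 0" "\<And>p q. p \<in> P \<Longrightarrow> q \<in> P \<Longrightarrow> p \<noteq> q \<Longrightarrow> \<delta> \<le> dist p q"
proof -
  define D where "D = (\<lambda>(p, q). dist p q) ` {(p, q) \<in> P \<times> P. p \<noteq> q}"
  have "finite D" unfolding D_def
    by (intro finite_imageI finite_subset[OF _ finite_cartesian_product[OF assms assms]]) auto
  moreover have "\<forall>x\<in>D. x > 0" unfolding D_def by auto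
  ultimately have "Min (insert 1 D) > 0" by (subst Min_gr_iff) auto
  moreover have "Min (insert 1 D) \<le> dist p q" if "p \<in> P" "q \<in> P" "p \<noteq> q" for p q
    using \<open>finite D\<close> that unfolding D_def by (intro Min_le) auto
  ultimately show thesis using that by blast
qed

lemma countable_embeds_in_unit_circle:
  fixes A :: "'a set"
  assumes "countable A"
  obtains e :: "'a \<Rightarrow> real \<times> real"
  where "inj_on e A" "\<And>x. norm (e x) = 1" "\<And>x. fst (e x) > 0"
proof
  define r where "r x = (1 :: real, real (to_nat_on A x))" for x
  have r_ne: "r x \<noteq> 0" for x by (simp add: r_def zero_prod_def)
  show "norm (sgn (r x)) = 1" for x using r_ne by (simp add: norm_sgn)
  show "fst (sgn (r x)) > 0" for x using r_ne by (simp add: sgn_div_norm r_def)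
  show "inj_on (\<lambda>x. sgn (r x)) A"
  proof (rule inj_onI)
    fix x y assume "x \<in> A" "y \<in> A" "sgn (r x) = sgn (r y)"
    then have "norm (r x) = norm (r y)"
      using r_ne by (auto simp: sgn_div_norm r_def prod_eq_iff)
    then have "r x = r y" using \<open>sgn (r x) = sgn (r y)\<close> r_ne
      by (simp add: sgn_div_norm)
    then show "x = y" using inj_on_to_nat_on[OF assms] \<open>x \<in> A\<close> \<open>y \<in> A\<close>
      by (auto simp: r_def dest: inj_onD)
  qed
qed

lemma unit_inner_gap:
  fixes p q :: "'a::real_inner"
  assumes "norm p = 1" "norm q = 1"
  shows "inner p p - inner q p = (norm (p - q))\<^sup>2 / 2"
proof -
  have "inner p p = 1" "inner q q = 1" using assms by (simp_all add: norm_eq_1)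
  then show ?thesis by (simp add: power2_norm_eq_inner inner_commute algebra_simps)
qed

lemma Min_index_mem:
  fixes v :: "'i::linorder \<Rightarrow> 'a"
  assumes "finite S" "I \<subseteq> v ` S" "I \<noteq> {}"
  shows "v (Min {i \<in> S. v i \<in> I}) \<in> I"
proof -
  have "{i \<in> S. v i \<in> I} \<noteq> {}" using assms(2,3) by blast
  then have "Min {i \<in> S. v i \<in> I} \<in> {i \<in> S. v i \<in> I}" using assms(1) by (intro Min_in) auto
  then show ?thesis by simp
qed

locale block_coordinates =
  fixes n :: nat and a b :: "nat \<Rightarrow> 'm::finite"
  assumes inj_a: "inj_on a {1..n}" and inj_b: "inj_on b {1..n}"
    and disjoint_ab: "a ` {1..n} \<inter> b ` {1..n} = {}"
begin

definition block :: "nat \<Rightarrow> real \<times> real \<Rightarrow> real ^ 'm" where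
  "block j p = axis (a j) (fst p) + axis (b j) (snd p)"

definition blocks :: "nat \<Rightarrow> (nat \<Rightarrow> real \<times> real) \<Rightarrow> real ^ 'm" where
  "blocks k p = (\<Sum>j=1..k. block j (p j))"

lemma a_neq_b: "j \<in> {1..n} \<Longrightarrow> l \<in> {1..n} \<Longrightarrow> a j \<noteq> b l"
  using disjoint_ab by blast

lemma inner_block:
  assumes "j \<in> {1..n}" "l \<in> {1..n}"
  shows "inner (block j p) (block l q) = (if j = l then inner p q else 0)"
  using assms a_neq_b[OF assms] a_neq_b[OF assms(2,1)] inj_onD[OF inj_a] inj_onD[OF inj_b]
  by (auto simp: block_def inner_add_left inner_add_right inner_axis_axis inner_prod_def)

lemma norm_block: "j \<in> {1..n} \<Longrightarrow> norm (block j p) = norm p"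
  by (simp add: norm_eq_sqrt_inner inner_block)

lemma inner_blocks:
  assumes "k \<le> n"
  shows "inner (blocks k p) (blocks k q) = (\<Sum>j=1..k. inner (p j) (q j))"
proof -
  have "inner (blocks k p) (blocks k q) = (\<Sum>j=1..k. \<Sum>l=1..k. inner (block j (p j)) (block l (q l)))"
    by (simp add: blocks_def inner_sum_left inner_sum_right) (rule sum.swap)
  also have "\<dots> = (\<Sum>j=1..k. \<Sum>l=1..k. if j = l then inner (p j) (q l) else 0)"
    using assms by (intro sum.cong refl) (simp add: inner_block)
  also have "\<dots> = (\<Sum>j=1..k. inner (p j) (q j))"
    by simp
  finally show ?thesis .
qed

lemma block_component:
  assumes "j \<in> {1..n}" "l \<in> {1..n}"
  shows "block j p $ a l = (if j = l then fst p else 0)"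
    and "block j p $ b l = (if j = l then snd p else 0)"
  using assms a_neq_b[OF assms] a_neq_b[OF assms(2,1)] inj_onD[OF inj_a] inj_onD[OF inj_b]
  by (auto simp: block_def axis_def)

lemma blocks_component:
  assumes "k \<le> n" "l \<in> {1..n}"
  shows "blocks k p $ a l = (if l \<le> k then fst (p l) else 0)"
    and "blocks k p $ b l = (if l \<le> k then snd (p l) else 0)"
proof -
  have "blocks k p $ a l = (\<Sum>j=1..k. if j = l then fst (p j) else 0)"
    "blocks k p $ b l = (\<Sum>j=1..k. if j = l then snd (p j) else 0)"
    using assms by (auto simp: blocks_def block_component intro!: sum.cong)
  then show "blocks k p $ a l = (if l \<le> k then fst (p l) else 0)"
    "blocks k p $ b l = (if l \<le> k then snd (p l) else 0)"
    using assms by simp_all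
qed

lemma blocks_eq_imp_eq:
  assumes "k \<in> {1..n}" "k' \<in> {1..n}" "blocks k p = blocks k' q"
    and "\<And>j. fst (p j) > 0" "\<And>j. fst (q j) > 0"
  shows "k = k'" and "\<And>j. j \<in> {1..k} \<Longrightarrow> p j = q j"
proof -
  have "fst (p j) \<noteq> 0" "fst (q j) \<noteq> 0" for j using assms(4,5) less_irrefl by metis+
  moreover have "(if l \<le> k then fst (p l) else 0) = (if l \<le> k' then fst (q l) else 0)"
    if "l \<in> {1..n}" for l
    using blocks_component(1)[of k l p] blocks_component(1)[of k' l q] assms(1-3) that by simp
  \<comment> \<open>\<open>k\<close> is the last block with nonzero \<open>a\<close>-coordinate\<close>
  ultimately show "k = k'"
    using assms(1,2) by (metis le_antisym nle_le)
  then show "p j = q j" if "j \<in> {1..k}" for j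
    using blocks_component[of k j p] blocks_component[of k j q] assms(1,3) that
    by (auto simp: prod_eq_iff)
qed

end

lemma card_ge_imp_ex_block_coordinates:
  assumes "CARD('m) \<ge> 2 * n"
  shows "\<exists>a b :: nat \<Rightarrow> 'm::finite. block_coordinates n a b"
proof -
  obtain h :: "nat \<Rightarrow> 'm" where h: "inj_on h {0..<2*n}"
    using card_le_inj[of "{0..<2*n}" "UNIV :: 'm set"] assms by auto
  show ?thesis
  proof (intro exI block_coordinates.intro)
    show "inj_on (\<lambda>j. h (2 * j - 2)) {1..n}" "inj_on (\<lambda>j. h (2 * j - 1)) {1..n}"
      using h by (auto intro!: inj_onI dest!: inj_onD)
    show "(\<lambda>j. h (2 * j - 2)) ` {1..n} \<inter> (\<lambda>j. h (2 * j - 1)) ` {1..n} = {}"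
      using h by (auto dest!: inj_onD) presburger
  qed
qed

locale subset_code = block_coordinates n a b for n :: nat and a b :: "nat \<Rightarrow> 'm::finite" +
  fixes U :: "'u set" and e :: "'u set \<Rightarrow> real \<times> real"
  assumes inj_e: "inj_on e (Pow U)"
    and norm_e: "\<And>V. norm (e V) = 1" and fst_e_pos: "\<And>V. fst (e V) > 0"
begin

definition code :: "nat \<Rightarrow> (nat \<Rightarrow> 'u set) \<Rightarrow> real ^ 'm" where
  "code k Vs = (1 / real n) *\<^sub>R blocks k (\<lambda>i. e (Vs i))"

definition codes :: "nat \<Rightarrow> (real ^ 'm) set" where
  "codes k = {code k Ws | Ws. \<forall>i\<in>{1..k}. Ws i \<subseteq> U}"

lemma code_eq_imp_eq:
  assumes "k \<in> {1..n}" "k' \<in> {1..n}" "code k Vs = code k' Ws"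
    and "\<forall>i\<in>{1..k}. Vs i \<subseteq> U" "\<forall>i\<in>{1..k'}. Ws i \<subseteq> U"
  shows "k = k'" and "\<And>i. i \<in> {1..k} \<Longrightarrow> Vs i = Ws i"
proof -
  have "blocks k (\<lambda>i. e (Vs i)) = blocks k' (\<lambda>i. e (Ws i))"
    using assms(1,3) by (simp add: code_def)
  note blocks_eq = blocks_eq_imp_eq[OF assms(1,2) this fst_e_pos fst_e_pos]
  show "k = k'" by (fact blocks_eq(1))
  show "Vs i = Ws i" if "i \<in> {1..k}" for i
    using inj_onD[OF inj_e blocks_eq(2)[OF that]] assms(4,5) blocks_eq(1) that by auto
qed

lemma norm_code_le_1:
  assumes "k \<le> n"
  shows "norm (code k Vs) \<le> 1"
proof -
  have "norm (blocks k (\<lambda>i. e (Vs i))) \<le> (\<Sum>j=1..k. norm (block j (e (Vs j))))"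
    unfolding blocks_def by (rule norm_sum)
  also have "\<dots> = real k"
    using assms by (simp add: norm_block norm_e)
  finally have "norm (code k Vs) \<le> real k / real n"
    by (simp add: code_def divide_right_mono)
  also have "\<dots> \<le> 1"
    using assms by (cases "n = 0") auto
  finally show ?thesis .
qed

lemma codes_gap:
  assumes "k \<le> n" "0 \<le> \<delta>"
    and sep: "\<And>p q. p \<in> e ` Pow U \<Longrightarrow> q \<in> e ` Pow U \<Longrightarrow> p \<noteq> q \<Longrightarrow> \<delta> \<le> dist p q"
    and "\<forall>i\<in>{1..k}. Vs i \<subseteq> U" "\<psi> \<in> codes k" "\<psi> \<noteq> code k Vs"
  shows "inner \<psi> (code k Vs) + \<delta>\<^sup>2 / (2 * (real n)\<^sup>2) \<le> inner (code k Vs) (code k Vs)"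
proof -
  obtain Ws where \<psi>: "\<psi> = code k Ws" and Ws: "\<forall>i\<in>{1..k}. Ws i \<subseteq> U"
    using assms(5) by (auto simp: codes_def)
  define T where "T j = (norm (e (Vs j) - e (Ws j)))\<^sup>2 / 2" for j
  have gap: "inner (code k Vs) (code k Vs) - inner (code k Ws) (code k Vs)
      = (\<Sum>j=1..k. T j) / (real n)\<^sup>2"
  proof -
    have "inner (code k Vs) (code k Vs) - inner (code k Ws) (code k Vs)
        = (\<Sum>j=1..k. inner (e (Vs j)) (e (Vs j)) - inner (e (Ws j)) (e (Vs j))) / (real n)\<^sup>2"
      using assms(1)
      by (simp add: code_def inner_blocks sum_subtractf diff_divide_distrib power2_eq_square)
    then show ?thesis
      by (simp add: unit_inner_gap norm_e T_def)
  qed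
  obtain j where j: "j \<in> {1..k}" "e (Vs j) \<noteq> e (Ws j)"
    using assms(6) unfolding \<psi> code_def blocks_def by (metis (no_types, lifting) sum.cong)
  have "\<delta>\<^sup>2 / 2 \<le> T j"
    using sep[of "e (Vs j)" "e (Ws j)"] assms(2,4) Ws j
    by (simp add: T_def dist_norm power_mono divide_right_mono)
  also have "T j \<le> (\<Sum>j=1..k. T j)"
    using j by (intro member_le_sum) (auto simp: T_def)
  finally have "\<delta>\<^sup>2 / 2 / (real n)\<^sup>2 \<le> (\<Sum>j=1..k. T j) / (real n)\<^sup>2"
    by (rule divide_right_mono) simp
  then show ?thesis
    using gap unfolding \<psi> by simp
qed

lemma ex_decoder:
  fixes v :: "'i::linorder \<Rightarrow> 'u"
  assumes "finite S" "v ` S = U" "U \<noteq> {}"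
  obtains \<alpha> :: "real ^ 'm \<Rightarrow> 'u"
  where "\<And>x. \<alpha> x \<in> U"
    and "\<And>k Vs. k \<in> {1..n} \<Longrightarrow> \<forall>i\<in>{1..k}. Vs i \<subseteq> U \<Longrightarrow> (\<Inter>i\<in>{1..k}. Vs i) \<noteq> {} \<Longrightarrow>
           \<alpha> (code k Vs) = v (Min {i \<in> S. v i \<in> (\<Inter>l\<in>{1..k}. Vs l)})"
proof -
  define A where "A = {(k, Vs). k \<in> {1..n} \<and> (\<forall>i\<in>{1..k}. Vs i \<subseteq> U) \<and> (\<Inter>i\<in>{1..k}. Vs i) \<noteq> {}}"
  define g where "g = (\<lambda>(k :: nat, Vs). v (Min {i \<in> S. v i \<in> (\<Inter>l\<in>{1..k}. Vs l)}))"
  have fibres: "g x = g y" if "x \<in> A" "y \<in> A" "case_prod code x = case_prod code y" for x y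
  proof -
    obtain k Vs k' Ws where xy: "x = (k, Vs)" "y = (k', Ws)" by fastforce
    with that have "k \<in> {1..n}" "k' \<in> {1..n}" "code k Vs = code k' Ws"
      "\<forall>i\<in>{1..k}. Vs i \<subseteq> U" "\<forall>i\<in>{1..k'}. Ws i \<subseteq> U"
      unfolding A_def by auto
    note code_eq = code_eq_imp_eq[OF this]
    have "(\<Inter>l\<in>{1..k}. Vs l) = (\<Inter>l\<in>{1..k'}. Ws l)"
      using code_eq by (intro INF_cong) auto
    then show ?thesis unfolding xy g_def by (simp only: prod.case)
  qed
  obtain h where h: "\<And>x. x \<in> A \<Longrightarrow> g x = h (case_prod code x)"
    using function_factors_left_gen[of "\<lambda>x. x \<in> A" "case_prod code" g] fibres by blast
  have gU: "g x \<in> U" if "x \<in> A" for x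
  proof -
    obtain k Vs where x: "x = (k, Vs)" by fastforce
    with that have "1 \<in> {1..k}" "Vs 1 \<subseteq> U" "(\<Inter>l\<in>{1..k}. Vs l) \<noteq> {}"
      unfolding A_def by auto
    then have "(\<Inter>l\<in>{1..k}. Vs l) \<subseteq> U" "(\<Inter>l\<in>{1..k}. Vs l) \<noteq> {}"
      by blast+
    then have "v (Min {i \<in> S. v i \<in> (\<Inter>l\<in>{1..k}. Vs l)}) \<in> (\<Inter>l\<in>{1..k}. Vs l)"
      using Min_index_mem[OF assms(1)] assms(2) by blast
    then show ?thesis
      using \<open>(\<Inter>l\<in>{1..k}. Vs l) \<subseteq> U\<close> unfolding x g_def by auto
  qed
  show thesis
  proof
    show "(if x \<in> case_prod code ` A then h x else SOME u. u \<in> U) \<in> U" for x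
      using gU h assms(3) by (auto simp: some_in_eq)
    show "(if code k Vs \<in> case_prod code ` A then h (code k Vs) else SOME u. u \<in> U)
        = v (Min {i \<in> S. v i \<in> (\<Inter>l\<in>{1..k}. Vs l)})"
      if "k \<in> {1..n}" "\<forall>i\<in>{1..k}. Vs i \<subseteq> U" "(\<Inter>i\<in>{1..k}. Vs i) \<noteq> {}" for k Vs
    proof -
      have "(k, Vs) \<in> A" using that unfolding A_def by simp
      then show ?thesis using h[of "(k, Vs)"] unfolding g_def by force
    qed
  qed
qed

end

theorem mainTheorem5:
  fixes n :: nat
    and U :: "(real ^ 'd) set"
    and v :: "nat \<Rightarrow> real ^ 'd"
  assumes n_ge: "n \<ge> 1"
    and dimm: "CARD('m) = 2 * n"
    and finU: "finite U"
    and cardU: "card U \<ge> 3"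
    and ballU: "\<forall>u\<in>U. norm u \<le> 1"
    and enum: "bij_betw v {1..card U} U"
  shows "\<exists>(\<Psi> :: nat \<Rightarrow> (real ^ 'm) set) (\<epsilon> :: real)
            (\<phi> :: (real ^ 'd) set \<Rightarrow> nat \<Rightarrow> real ^ 'm)
            (\<alpha> :: real ^ 'm \<Rightarrow> real ^ 'd).
     0 < \<epsilon> \<and> \<epsilon> < 1 / real n \<and>
     (\<forall>x. \<alpha> x \<in> U) \<and>
     (\<forall>V j. V \<subseteq> U \<and> j \<in> {1..n} \<longrightarrow> norm (\<phi> V j) \<le> 1) \<and>
     (\<forall>k\<in>{1..n}. \<forall>\<psi>\<in>\<Psi> k. norm \<psi> \<le> 1 \<and> norm (\<alpha> \<psi>) \<le> 1) \<and>
     (\<forall>k\<in>{1..n}. \<forall>Vs :: nat \<Rightarrow> (real ^ 'd) set.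
        (\<forall>i\<in>{1..k}. Vs i \<subseteq> U) \<longrightarrow>
        (let s = (1 / real n) *\<^sub>R (\<Sum>i=1..k. \<phi> (Vs i) i) in
           s \<in> \<Psi> k \<and>
           (\<forall>\<psi>\<in>\<Psi> k. \<psi> \<noteq> s \<longrightarrow> inner s s \<ge> inner \<psi> s + \<epsilon>) \<and>
           ((\<Inter>i\<in>{1..k}. Vs i) \<noteq> {} \<longrightarrow>
              \<alpha> s = v (Min {i \<in> {1..card U}. v i \<in> (\<Inter>l\<in>{1..k}. Vs l)}))))"
proof -
  obtain a b :: "nat \<Rightarrow> 'm" where "block_coordinates n a b"
    using card_ge_imp_ex_block_coordinates[where 'm='m, of n] dimm by auto
  moreover obtain e :: "(real ^ 'd) set \<Rightarrow> real \<times> real"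
    where "inj_on e (Pow U)" "\<And>V. norm (e V) = 1" "\<And>V. fst (e V) > 0"
    using countable_embeds_in_unit_circle countable_finite finU by (metis finite_Pow_iff)
  ultimately interpret subset_code n a b U e
    by (intro subset_code.intro subset_code_axioms.intro)
  obtain \<delta> where \<delta>: "\<delta> > 0" "\<And>p q. p \<in> e ` Pow U \<Longrightarrow> q \<in> e ` Pow U \<Longrightarrow> p \<noteq> q \<Longrightarrow> \<delta> \<le> dist p q"
    using finite_imp_uniformly_discrete[of "e ` Pow U"] finU by auto
  have "U \<noteq> {}"
    using cardU by auto
  then obtain \<alpha> where \<alpha>: "\<And>x. \<alpha> x \<in> U"
    "\<And>k Vs. k \<in> {1..n} \<Longrightarrow> \<forall>i\<in>{1..k}. Vs i \<subseteq> U \<Longrightarrow> (\<Inter>i\<in>{1..k}. Vs i) \<noteq> {} \<Longrightarrow>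
       \<alpha> (code k Vs) = v (Min {i \<in> {1..card U}. v i \<in> (\<Inter>l\<in>{1..k}. Vs l)})"
    by (rule ex_decoder[OF finite_atLeastAtMost bij_betw_imp_surj_on[OF enum]]) blast
  define \<epsilon> where "\<epsilon> = min (\<delta>\<^sup>2 / (2 * (real n)\<^sup>2)) (1 / (2 * real n))"
  have sum_block: "(1 / real n) *\<^sub>R (\<Sum>i=1..k. block i (e (Vs i))) = code k Vs" for k Vs
    by (simp add: code_def blocks_def)
  show ?thesis
  proof (intro exI[of _ codes] exI[of _ \<epsilon>] exI[of _ "\<lambda>V j. block j (e V)"] exI[of _ \<alpha>] conjI
      ballI allI impI)
    show "0 < \<epsilon>"
      using \<delta>(1) n_ge by (simp add: \<epsilon>_def)
    have "1 / (2 * real n) < 1 / real n"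
      using n_ge by (simp add: field_simps)
    then show "\<epsilon> < 1 / real n"
      by (simp add: \<epsilon>_def min_less_iff_disj)
    show "\<alpha> x \<in> U" for x
      by (fact \<alpha>(1))
    show "norm (block j (e V)) \<le> 1" if "V \<subseteq> U \<and> j \<in> {1..n}" for V j
      using that by (simp add: norm_block norm_e)
    show "norm \<psi> \<le> 1" "norm (\<alpha> \<psi>) \<le> 1" if "k \<in> {1..n}" "\<psi> \<in> codes k" for k \<psi>
      using that norm_code_le_1 ballU \<alpha>(1) by (auto simp: codes_def)
    show "let s = (1 / real n) *\<^sub>R (\<Sum>i=1..k. block i (e (Vs i))) in
        s \<in> codes k \<and> (\<forall>\<psi>\<in>codes k. \<psi> \<noteq> s \<longrightarrow> inner \<psi> s + \<epsilon> \<le> inner s s) \<and>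
        ((\<Inter>i\<in>{1..k}. Vs i) \<noteq> {} \<longrightarrow>
           \<alpha> s = v (Min {i \<in> {1..card U}. v i \<in> (\<Inter>l\<in>{1..k}. Vs l)}))"
      if "k \<in> {1..n}" "\<forall>i\<in>{1..k}. Vs i \<subseteq> U" for k Vs
    proof -
      have "\<epsilon> \<le> \<delta>\<^sup>2 / (2 * (real n)\<^sup>2)"
        by (simp add: \<epsilon>_def)
      then have "inner \<psi> (code k Vs) + \<epsilon> \<le> inner (code k Vs) (code k Vs)"
        if "\<psi> \<in> codes k" "\<psi> \<noteq> code k Vs" for \<psi>
        using codes_gap[of k \<delta> Vs \<psi>] \<open>k \<in> {1..n}\<close> \<open>\<forall>i\<in>{1..k}. Vs i \<subseteq> U\<close> \<delta> that
        by force
      moreover have "code k Vs \<in> codes k"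
        using that by (auto simp: codes_def)
      ultimately show ?thesis
        unfolding sum_block Let_def using \<alpha>(2)[OF that] by blast
    qed
  qed
qed

end
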